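(* Let $P=\varprojlim\langle\{P_n\},\{p^n_k\}_{k<n}\rangle$ and $H=\varprojlim\langle\{H_n\},\{h^n_k\}_{k<n}\rangle$ be profinite posets and $f:P\to H$ a continuous quotient map. Then there exist a strictly increasing sequence $(i_n)_{n\in\mathbb{N}}$ of natural numbers and quotient maps $g_j:P_{i_j}\to H_j$ such that $f(x_1,x_2,\dots)=(g_1(x_{i_1}),g_2(x_{i_2}),\dots)$ for all $(x_n)\in P$, and $g_k\circ p^{i_n}_{i_k}=h^n_k\circ g_n$ for all $k<n$.
   Context: A quotient map between posets is a surjective order-preserving map $\phi:A\to B$ such that for all $p\le r$ in $B$ there are $x\le y$ in $A$ with $\phi(x)=p,\phi(y)=r$. A profinite poset is an inverse limit $\{(x_n)\in\prod_n P_n:p^{n+1}_n(x_{n+1})=x_n\ \forall n\}$ of nonempty finite posets $P_n$ with quotient maps $p^m_k:P_m\to P_k$ ($k<m$) satisfying $p^k_l\circ p^m_k=p^m_l$, ordered coordinatewise and topologized as a subspace of the product of discrete spaces. *)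

theory Defs
  imports "HOL-Analysis.Analysis"
begin

definition is_poset :: "'a set \<Rightarrow> ('a \<Rightarrow> 'a \<Rightarrow> bool) \<Rightarrow> bool" where
  "is_poset A le \<longleftrightarrow>
     (\<forall>x\<in>A. le x x) \<and>
     (\<forall>x\<in>A. \<forall>y\<in>A. le x y \<and> le y x \<longrightarrow> x = y) \<and>
     (\<forall>x\<in>A. \<forall>y\<in>A. \<forall>z\<in>A. le x y \<and> le y z \<longrightarrow> le x z)"

definition quotient_map_poset ::
  "'a set \<Rightarrow> ('a \<Rightarrow> 'a \<Rightarrow> bool) \<Rightarrow> 'b set \<Rightarrow> ('b \<Rightarrow> 'b \<Rightarrow> bool) \<Rightarrow> ('a \<Rightarrow> 'b) \<Rightarrow> bool" where
  "quotient_map_poset A leA B leB \<phi> \<longleftrightarrow>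
     \<phi> ` A = B \<and>
     (\<forall>x\<in>A. \<forall>y\<in>A. leA x y \<longrightarrow> leB (\<phi> x) (\<phi> y)) \<and>
     (\<forall>p\<in>B. \<forall>r\<in>B. leB p r \<longrightarrow> (\<exists>x\<in>A. \<exists>y\<in>A. leA x y \<and> \<phi> x = p \<and> \<phi> y = r))"

definition profinite_system ::
  "(nat \<Rightarrow> 'a set) \<Rightarrow> (nat \<Rightarrow> 'a \<Rightarrow> 'a \<Rightarrow> bool) \<Rightarrow> (nat \<Rightarrow> nat \<Rightarrow> 'a \<Rightarrow> 'a) \<Rightarrow> bool" where
  "profinite_system P le p \<longleftrightarrow>
     (\<forall>n. finite (P n) \<and> P n \<noteq> {} \<and> is_poset (P n) (le n)) \<and>
     (\<forall>k m. k < m \<longrightarrow> quotient_map_poset (P m) (le m) (P k) (le k) (p m k)) \<and>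
     (\<forall>l k m. l < k \<and> k < m \<longrightarrow> (\<forall>x\<in>P m. p k l (p m k x) = p m l x))"

definition invlim :: "(nat \<Rightarrow> 'a set) \<Rightarrow> (nat \<Rightarrow> nat \<Rightarrow> 'a \<Rightarrow> 'a) \<Rightarrow> (nat \<Rightarrow> 'a) set" where
  "invlim P p = {x. (\<forall>n. x n \<in> P n) \<and> (\<forall>n. p (Suc n) n (x (Suc n)) = x n)}"

definition invlim_le :: "(nat \<Rightarrow> 'a \<Rightarrow> 'a \<Rightarrow> bool) \<Rightarrow> (nat \<Rightarrow> 'a) \<Rightarrow> (nat \<Rightarrow> 'a) \<Rightarrow> bool" where
  "invlim_le le x y \<longleftrightarrow> (\<forall>n. le n (x n) (y n))"

definition invlim_top :: "(nat \<Rightarrow> 'a set) \<Rightarrow> (nat \<Rightarrow> nat \<Rightarrow> 'a \<Rightarrow> 'a) \<Rightarrow> (nat \<Rightarrow> 'a) topology" where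
  "invlim_top P p = subtopology (product_topology (\<lambda>n. discrete_topology (P n)) UNIV) (invlim P p)"

end

theory Submission
  imports Defs
begin

text \<open>Each coordinate \<open>x \<mapsto> f x j\<close> is a continuous map from the compact space \<open>P\<close> into the
  discrete space \<open>H\<^sub>j\<close>, so it is locally constant; the cylinders \<open>{x. x N = a}\<close> form a
  neighbourhood basis that shrinks as \<open>N\<close> grows, so by compactness the coordinate depends only on
  one level \<open>x N\<^sub>j\<close> of the thread. Any strictly increasing \<open>i\<close> with \<open>i j \<ge> N\<^sub>j\<close> then yields
  maps \<open>g\<^sub>j\<close> with \<open>f x j = g\<^sub>j (x (i j))\<close>. Since the bonding maps are quotient maps, every
  comparable pair at a finite level lifts, level by level, to a comparable pair of threads;
  this transfers the quotient property from \<open>f\<close> to each \<open>g\<^sub>j\<close>, and the compatibility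
  \<open>g\<^sub>k \<circ> p = h \<circ> g\<^sub>n\<close> follows from the thread conditions in \<open>P\<close> and \<open>H\<close>.\<close>

lemma quotient_map_posetD:
  assumes "quotient_map_poset A leA B leB \<phi>"
  shows quotient_map_poset_image: "\<phi> ` A = B"
    and quotient_map_poset_mono: "\<lbrakk>x \<in> A; y \<in> A; leA x y\<rbrakk> \<Longrightarrow> leB (\<phi> x) (\<phi> y)"
    and quotient_map_poset_lift:
      "\<lbrakk>c \<in> B; d \<in> B; leB c d\<rbrakk> \<Longrightarrow> \<exists>x\<in>A. \<exists>y\<in>A. leA x y \<and> \<phi> x = c \<and> \<phi> y = d"
proof -
  note q = assms[unfolded quotient_map_poset_def]
  show "\<phi> ` A = B" using q by (rule conjunct1)
  show "\<lbrakk>x \<in> A; y \<in> A; leA x y\<rbrakk> \<Longrightarrow> leB (\<phi> x) (\<phi> y)" using q by blast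
  show "\<lbrakk>c \<in> B; d \<in> B; leB c d\<rbrakk> \<Longrightarrow> \<exists>x\<in>A. \<exists>y\<in>A. leA x y \<and> \<phi> x = c \<and> \<phi> y = d"
    using q by blast
qed

lemma profinite_systemD:
  assumes "profinite_system P le p"
  shows profinite_system_level: "finite (P n) \<and> P n \<noteq> {} \<and> is_poset (P n) (le n)"
    and profinite_system_bonding: "k < m \<Longrightarrow> quotient_map_poset (P m) (le m) (P k) (le k) (p m k)"
    and profinite_system_comp: "\<lbrakk>l < k; k < m; z \<in> P m\<rbrakk> \<Longrightarrow> p k l (p m k z) = p m l z"
  using assms unfolding profinite_system_def by simp_all

lemma invlim_proj:
  assumes S: "profinite_system P le p" and x: "x \<in> invlim P p" and "k < m"
  shows "p m k (x m) = x k"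
  using \<open>k < m\<close>
proof (induction m)
  case 0
  then show ?case by simp
next
  case (Suc m)
  have step: "p (Suc m) m (x (Suc m)) = x m" and mem: "x (Suc m) \<in> P (Suc m)"
    using x by (simp_all add: invlim_def)
  show ?case
  proof (cases "k = m")
    case True
    with step show ?thesis by simp
  next
    case False
    with Suc.prems have "k < m" by simp
    with mem have "p m k (p (Suc m) m (x (Suc m))) = p (Suc m) k (x (Suc m))"
      by (intro profinite_system_comp[OF S]) simp_all
    with step Suc.IH \<open>k < m\<close> show ?thesis by simp
  qed
qed

lemma invlim_eq_below:
  assumes S: "profinite_system P le p" and x: "x \<in> invlim P p" and y: "y \<in> invlim P p"
    and "x m = y m" and "k \<le> m"
  shows "x k = y k"
  using assms invlim_proj[OF S x, of k m] invlim_proj[OF S y, of k m]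
  by (cases "k = m") auto

lemma invlim_lift_pair:
  assumes S: "profinite_system P le p" and a: "a \<in> P n" and b: "b \<in> P n" and ab: "le n a b"
  shows "\<exists>x\<in>invlim P p. \<exists>y\<in>invlim P p. invlim_le le x y \<and> x n = a \<and> y n = b"
proof -
  define comparable where
    "comparable m cd \<longleftrightarrow> fst cd \<in> P m \<and> snd cd \<in> P m \<and> le m (fst cd) (snd cd)" for m cd
  define lies_over where
    "lies_over m cd cd' \<longleftrightarrow> p (Suc m) m (fst cd') = fst cd \<and> p (Suc m) m (snd cd') = snd cd"
    for m cd cd'
  have "\<exists>s. \<forall>t. (comparable (n + t) (s t) \<and> (t = 0 \<longrightarrow> s t = (a, b)))
              \<and> lies_over (n + t) (s t) (s (Suc t))"
  proof (rule dependent_nat_choice)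
    show "\<exists>cd. comparable (n + 0) cd \<and> (0 = (0::nat) \<longrightarrow> cd = (a, b))"
      using a b ab by (simp add: comparable_def)
  next
    fix cd t assume "comparable (n + t) cd \<and> (t = 0 \<longrightarrow> cd = (a, b))"
    then obtain c' d' where "c' \<in> P (Suc (n + t))" "d' \<in> P (Suc (n + t))"
      "le (Suc (n + t)) c' d'" "p (Suc (n + t)) (n + t) c' = fst cd"
      "p (Suc (n + t)) (n + t) d' = snd cd"
      using quotient_map_poset_lift[OF profinite_system_bonding[OF S, of "n + t" "Suc (n + t)"]]
      unfolding comparable_def by blast
    then show "\<exists>cd'. (comparable (n + Suc t) cd' \<and> (Suc t = 0 \<longrightarrow> cd' = (a, b)))
                 \<and> lies_over (n + t) cd cd'"
      by (intro exI[of _ "(c', d')"]) (simp add: comparable_def lies_over_def)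
  qed
  then obtain s where s0: "s 0 = (a, b)"
    and s: "\<And>t. comparable (n + t) (s t) \<and> lies_over (n + t) (s t) (s (Suc t))"
    by blast
  define x where "x m = (if m < n then p n m a else fst (s (m - n)))" for m
  define y where "y m = (if m < n then p n m b else snd (s (m - n)))" for m
  have level: "x m \<in> P m \<and> y m \<in> P m \<and> le m (x m) (y m)" for m
  proof (cases "m < n")
    case True
    note q = profinite_system_bonding[OF S True]
    have "p n m a \<in> P m" "p n m b \<in> P m"
      using a b quotient_map_poset_image[OF q] by blast+
    moreover have "le m (p n m a) (p n m b)" using quotient_map_poset_mono[OF q a b ab] .
    ultimately show ?thesis using True unfolding x_def y_def by simp
  next
    case False
    then show ?thesis using s[of "m - n"] unfolding x_def y_def comparable_def by simp
  qed
  have bond: "p (Suc m) m (x (Suc m)) = x m \<and> p (Suc m) m (y (Suc m)) = y m" for m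
  proof -
    consider "Suc m < n" | "Suc m = n" | "n \<le> m" by linarith
    then show ?thesis
    proof cases
      case 1
      then show ?thesis
        using profinite_system_comp[OF S, of m "Suc m" n] a b unfolding x_def y_def by simp
    next
      case 2
      then show ?thesis using s0 unfolding x_def y_def by auto
    next
      case 3
      then have "Suc m - n = Suc (m - n)" "n + (m - n) = m" by auto
      with 3 show ?thesis using s[of "m - n"] unfolding x_def y_def lies_over_def by auto
    qed
  qed
  have "x \<in> invlim P p" "y \<in> invlim P p" "invlim_le le x y"
    using level bond unfolding invlim_def invlim_le_def by auto
  moreover have "x n = a" "y n = b" using s0 unfolding x_def y_def by auto
  ultimately show ?thesis by blast
qed

lemma invlim_lift_point:
  assumes S: "profinite_system P le p" and a: "a \<in> P n"
  shows "\<exists>x\<in>invlim P p. x n = a"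
proof -
  have "le n a a" using profinite_system_level[OF S] a unfolding is_poset_def by blast
  then show ?thesis using invlim_lift_pair[OF S a a] by blast
qed

lemma topspace_invlim_top: "topspace (invlim_top P p) = invlim P p"
  by (auto simp: invlim_top_def invlim_def)

lemma continuous_map_invlim_proj:
  "continuous_map (invlim_top P p) (discrete_topology (P n)) (\<lambda>x. x n)"
  unfolding invlim_top_def
  by (rule continuous_map_from_subtopology)
     (rule continuous_map_product_projection[of n UNIV "\<lambda>n. discrete_topology (P n)", simplified])

lemma openin_invlim_cylinder: "openin (invlim_top P p) {x \<in> invlim P p. x n = a}"
proof (cases "a \<in> P n")
  case True
  have "openin (invlim_top P p) {x \<in> topspace (invlim_top P p). x n \<in> {a}}"
    using True by (intro openin_continuous_map_preimage[OF continuous_map_invlim_proj]) auto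
  then show ?thesis by (simp add: topspace_invlim_top)
next
  case False
  then have "{x \<in> invlim P p. x n = a} = {}" by (auto simp: invlim_def)
  then show ?thesis by (metis openin_empty)
qed

lemma invlim_open_contains_cylinder:
  assumes S: "profinite_system P le p"
    and U: "openin (invlim_top P p) U" and x: "x \<in> U"
  shows "\<exists>N. \<forall>y\<in>invlim P p. y N = x N \<longrightarrow> y \<in> U"
proof -
  let ?X = "product_topology (\<lambda>n. discrete_topology (P n)) UNIV"
  obtain T where T: "openin ?X T" and UT: "U = T \<inter> invlim P p"
    using U unfolding invlim_top_def openin_subtopology by blast
  obtain V where V: "finite {n. V n \<noteq> P n}" and xV: "x \<in> Pi\<^sub>E UNIV V"
    and VT: "Pi\<^sub>E UNIV V \<subseteq> T"
  proof -
    have "x \<in> T" using x UT by blast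
    then obtain V where "finite {n \<in> UNIV. V n \<noteq> topspace (discrete_topology (P n))}"
      "x \<in> Pi\<^sub>E UNIV V" "Pi\<^sub>E UNIV V \<subseteq> T"
      using T unfolding openin_product_topology_alt by blast
    then show thesis using that by simp
  qed
  obtain N where N: "\<And>n. V n \<noteq> P n \<Longrightarrow> n \<le> N"
    using V unfolding finite_nat_set_iff_bounded_le by blast
  have "y \<in> U" if y: "y \<in> invlim P p" and yx: "y N = x N" for y
  proof -
    have "y n \<in> V n" for n
    proof (cases "V n = P n")
      case True
      then show ?thesis using y by (simp add: invlim_def)
    next
      case False
      moreover have "x \<in> invlim P p" using x UT by blast
      ultimately have "y n = x n" using N invlim_eq_below[OF S y, of x N n] yx by blast
      then show ?thesis using xV by auto
    qed
    then show ?thesis using VT UT y by auto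
  qed
  then show ?thesis by blast
qed

lemma compact_space_invlim_top:
  assumes S: "profinite_system P le p"
  shows "compact_space (invlim_top P p)"
proof -
  let ?X = "product_topology (\<lambda>n. discrete_topology (P n)) UNIV"
  let ?bonded = "\<lambda>n. {x \<in> topspace ?X. p (Suc n) n (x (Suc n)) = x n}"
  have "compact_space ?X"
    using profinite_system_level[OF S]
    by (simp add: compact_space_product_topology compact_space_discrete_topology)
  moreover have "closedin ?X (?bonded n)" for n
  proof (rule closedin_continuous_maps_eq)
    have "p (Suc n) n \<in> P (Suc n) \<rightarrow> P n"
      using quotient_map_poset_image[OF profinite_system_bonding[OF S, of n "Suc n"]] by auto
    then show "continuous_map ?X (discrete_topology (P n)) (\<lambda>x. p (Suc n) n (x (Suc n)))"
      using continuous_map_product_projection[of "Suc n" UNIV "\<lambda>n. discrete_topology (P n)"]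
      by (auto intro: continuous_map_compose[unfolded o_def])
  qed (use continuous_map_product_projection[of n UNIV "\<lambda>n. discrete_topology (P n)"] in auto)
  then have "closedin ?X (\<Inter>n. ?bonded n)" by (intro closedin_Inter) auto
  moreover have "invlim P p = (\<Inter>n. ?bonded n)" by (auto simp: invlim_def)
  ultimately have "compactin ?X (invlim P p)" by (simp add: closedin_compact_space)
  then show ?thesis unfolding invlim_top_def by (rule compact_space_subtopology)
qed

lemma compact_space_mono_open_cover:
  fixes W :: "nat \<Rightarrow> 'a set"
  assumes "compact_space X" and "\<And>n. openin X (W n)" and "mono W"
    and "topspace X \<subseteq> (\<Union>n. W n)"
  shows "\<exists>N. topspace X \<subseteq> W N"
proof -
  obtain \<F> where "finite \<F>" "\<F> \<subseteq> range W" "topspace X \<subseteq> \<Union>\<F>"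
    using assms(1)[unfolded compact_space_def compactin_def, THEN conjunct2, rule_format, of "range W"]
      assms(2,4) by blast
  then obtain K where K: "finite K" "topspace X \<subseteq> (\<Union>n\<in>K. W n)"
    using finite_subset_image[of \<F> W UNIV] by blast
  obtain N where "\<forall>n\<in>K. n \<le> N"
    using K(1) finite_nat_set_iff_bounded_le by blast
  then have "(\<Union>n\<in>K. W n) \<subseteq> W N" using \<open>mono W\<close> by (auto dest: monoD)
  then show ?thesis using K(2) by blast
qed

definition factors_through_level ::
  "(nat \<Rightarrow> 'a set) \<Rightarrow> (nat \<Rightarrow> nat \<Rightarrow> 'a \<Rightarrow> 'a) \<Rightarrow> ((nat \<Rightarrow> 'a) \<Rightarrow> 'c) \<Rightarrow> nat \<Rightarrow> bool" where
  "factors_through_level P p F N \<longleftrightarrow> (\<forall>x\<in>invlim P p. \<forall>y\<in>invlim P p. x N = y N \<longrightarrow> F x = F y)"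

lemma factors_through_level_mono:
  assumes S: "profinite_system P le p"
    and F: "factors_through_level P p F N" and "N \<le> M"
  shows "factors_through_level P p F M"
  using F invlim_eq_below[OF S _ _ _ \<open>N \<le> M\<close>] unfolding factors_through_level_def by blast

lemma continuous_map_discrete_factors_through_level:
  assumes S: "profinite_system P le p"
    and F: "continuous_map (invlim_top P p) (discrete_topology B) F"
  shows "\<exists>N. factors_through_level P p F N"
proof -
  define W where "W N = {x \<in> invlim P p. \<forall>y\<in>invlim P p. y N = x N \<longrightarrow> F y = F x}" for N
  have "openin (invlim_top P p) (W N)" for N
  proof (subst openin_subopen, intro ballI)
    fix x assume "x \<in> W N"
    then have x: "x \<in> invlim P p" and Fx: "\<And>y. y \<in> invlim P p \<Longrightarrow> y N = x N \<Longrightarrow> F y = F x"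
      unfolding W_def by blast+
    have "{y \<in> invlim P p. y N = x N} \<subseteq> W N"
      unfolding W_def using Fx by auto
    then show "\<exists>T. openin (invlim_top P p) T \<and> x \<in> T \<and> T \<subseteq> W N"
      using x openin_invlim_cylinder[of P p N "x N"] by (intro exI[of _ "{y \<in> invlim P p. y N = x N}"]) simp
  qed
  moreover have "mono W"
  proof (rule monoI, rule subsetI)
    fix N M x assume "N \<le> M" and "x \<in> W N"
    then have x: "x \<in> invlim P p" and Fx: "\<And>y. y \<in> invlim P p \<Longrightarrow> y N = x N \<Longrightarrow> F y = F x"
      unfolding W_def by blast+
    have "F y = F x" if "y \<in> invlim P p" "y M = x M" for y
      using Fx[OF that(1) invlim_eq_below[OF S that(1) x that(2) \<open>N \<le> M\<close>]] .
    then show "x \<in> W M" using x unfolding W_def by blast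
  qed
  moreover have "invlim P p \<subseteq> (\<Union>N. W N)"
  proof
    fix x assume x: "x \<in> invlim P p"
    let ?fibre = "{y \<in> invlim P p. F y = F x}"
    have "F x \<in> B"
      using continuous_map_image_subset_topspace[OF F] x by (auto simp: topspace_invlim_top)
    then have "openin (invlim_top P p) {y \<in> topspace (invlim_top P p). F y \<in> {F x}}"
      by (intro openin_continuous_map_preimage[OF F]) auto
    then have "openin (invlim_top P p) ?fibre"
      by (simp add: topspace_invlim_top)
    from invlim_open_contains_cylinder[OF S this] x
    obtain N where "\<forall>y\<in>invlim P p. y N = x N \<longrightarrow> y \<in> ?fibre"
      by blast
    then have "x \<in> W N" using x unfolding W_def by blast
    then show "x \<in> (\<Union>N. W N)" by blast
  qed
  ultimately obtain N where N: "invlim P p \<subseteq> W N"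
    using compact_space_mono_open_cover[OF compact_space_invlim_top[OF S], of W]
    unfolding topspace_invlim_top by blast
  have "F x = F y" if "x \<in> invlim P p" "y \<in> invlim P p" "x N = y N" for x y
  proof -
    have "\<forall>z\<in>invlim P p. z N = y N \<longrightarrow> F z = F y" using N that(2) unfolding W_def by blast
    then show ?thesis using that by blast
  qed
  then have "factors_through_level P p F N"
    unfolding factors_through_level_def by blast
  then show ?thesis ..
qed

lemma strict_mono_dominating: "\<exists>i :: nat \<Rightarrow> nat. strict_mono i \<and> (\<forall>j. N j \<le> i j)"
proof (intro exI conjI allI)
  show "strict_mono (\<lambda>j. j + (\<Sum>k\<le>j. N k))" by (simp add: strict_mono_Suc_iff)
  show "N j \<le> j + (\<Sum>k\<le>j. N k)" for j
    using member_le_sum[of j "{..j}" N] by simp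
qed

lemma factors_through_levelE:
  assumes "factors_through_level P p F N"
  obtains g where "\<And>x. x \<in> invlim P p \<Longrightarrow> F x = g (x N)"
proof -
  define lift where "lift a = (SOME x. x \<in> invlim P p \<and> x N = a)" for a
  have "F x = F (lift (x N))" if x: "x \<in> invlim P p" for x
  proof -
    have "lift (x N) \<in> invlim P p \<and> lift (x N) N = x N"
      unfolding lift_def by (rule someI[of _ x]) (simp add: x)
    then show ?thesis
      using assms[unfolded factors_through_level_def, rule_format, OF x, of "lift (x N)"] by simp
  qed
  then show thesis using that[of "\<lambda>a. F (lift a)"] by blast
qed

lemma continuous_map_invlim_factors_levelwise:
  assumes SP: "profinite_system P leP p"
    and f: "continuous_map (invlim_top P p) (invlim_top H h) f"
  obtains i g where "strict_mono i" and "\<And>x j. x \<in> invlim P p \<Longrightarrow> f x j = g j (x (i j))"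
proof -
  have "continuous_map (invlim_top P p) (discrete_topology (H j)) (\<lambda>x. f x j)" for j
    using continuous_map_compose[OF f continuous_map_invlim_proj] by (simp add: o_def)
  then have "\<forall>j. \<exists>N. factors_through_level P p (\<lambda>x. f x j) N"
    using continuous_map_discrete_factors_through_level[OF SP] by blast
  then obtain N where "\<And>j. factors_through_level P p (\<lambda>x. f x j) (N j)" by metis
  moreover obtain i where i: "strict_mono i" "\<And>j. N j \<le> i j"
    using strict_mono_dominating by blast
  ultimately have "factors_through_level P p (\<lambda>x. f x j) (i j)" for j
    using factors_through_level_mono[OF SP] by blast
  then have "\<forall>j. \<exists>g. \<forall>x\<in>invlim P p. f x j = g (x (i j))"
    by (metis factors_through_levelE)
  then obtain g where "\<forall>j. \<forall>x\<in>invlim P p. f x j = g j (x (i j))" by metis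
  with i that show thesis by blast
qed

lemma quotient_map_poset_level_factor:
  assumes SP: "profinite_system P leP p" and SH: "profinite_system H leH h"
    and f: "quotient_map_poset (invlim P p) (invlim_le leP) (invlim H h) (invlim_le leH) f"
    and g: "\<And>x. x \<in> invlim P p \<Longrightarrow> f x j = g (x m)"
  shows "quotient_map_poset (P m) (leP m) (H j) (leH j) g"
  unfolding quotient_map_poset_def
proof (intro conjI ballI impI)
  have fP: "f ` invlim P p = invlim H h" by (rule quotient_map_poset_image[OF f])
  show "g ` P m = H j"
  proof
    show "g ` P m \<subseteq> H j"
    proof
      fix b assume "b \<in> g ` P m"
      then obtain a where a: "a \<in> P m" and b: "b = g a" by blast
      obtain x where x: "x \<in> invlim P p" and xa: "x m = a"
        using invlim_lift_point[OF SP a] by blast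
      have "f x \<in> invlim H h" using fP x by blast
      then have "f x j \<in> H j" by (simp add: invlim_def)
      then show "b \<in> H j" using g[OF x] xa b by simp
    qed
    show "H j \<subseteq> g ` P m"
    proof
      fix b assume "b \<in> H j"
      then obtain u where u: "u \<in> invlim H h" and ub: "u j = b"
        using invlim_lift_point[OF SH] by blast
      then obtain x where x: "x \<in> invlim P p" and fx: "f x = u"
        using fP by (metis imageE)
      have "x m \<in> P m" using x by (simp add: invlim_def)
      moreover have "b = g (x m)" using g[OF x] fx ub by simp
      ultimately show "b \<in> g ` P m" by (rule rev_image_eqI)
    qed
  qed
next
  fix a b assume a: "a \<in> P m" and b: "b \<in> P m" and ab: "leP m a b"
  obtain x y where x: "x \<in> invlim P p" and y: "y \<in> invlim P p" and xy: "invlim_le leP x y"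
    and xa: "x m = a" and yb: "y m = b"
    using invlim_lift_pair[OF SP a b ab] by blast
  have "leH j (f x j) (f y j)"
    using quotient_map_poset_mono[OF f x y, OF xy] unfolding invlim_le_def by blast
  then show "leH j (g a) (g b)" using g[OF x] g[OF y] xa yb by simp
next
  fix c d assume c: "c \<in> H j" and d: "d \<in> H j" and cd: "leH j c d"
  obtain u v where u: "u \<in> invlim H h" and v: "v \<in> invlim H h" and uv: "invlim_le leH u v"
    and uc: "u j = c" and vd: "v j = d"
    using invlim_lift_pair[OF SH c d cd] by blast
  obtain x y where x: "x \<in> invlim P p" and y: "y \<in> invlim P p"
    and xy: "invlim_le leP x y" and fx: "f x = u" and fy: "f y = v"
    using quotient_map_poset_lift[OF f u v, OF uv] by blast
  have "x m \<in> P m" "y m \<in> P m" "leP m (x m) (y m)"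
    using x y xy by (simp_all add: invlim_def invlim_le_def)
  moreover have "g (x m) = c" "g (y m) = d"
    using g[OF x] g[OF y] fx fy uc vd by simp_all
  ultimately show "\<exists>x\<in>P m. \<exists>y\<in>P m. leP m x y \<and> g x = c \<and> g y = d" by blast
qed

lemma level_factors_commute:
  assumes SP: "profinite_system P leP p" and SH: "profinite_system H leH h"
    and f: "f ` invlim P p \<subseteq> invlim H h"
    and g: "\<And>x j. x \<in> invlim P p \<Longrightarrow> f x j = g j (x (i j))"
    and i: "strict_mono i" and "k < n" and a: "a \<in> P (i n)"
  shows "g k (p (i n) (i k) a) = h n k (g n a)"
proof -
  obtain x where x: "x \<in> invlim P p" and xa: "x (i n) = a"
    using invlim_lift_point[OF SP a] by blast
  have fx: "f x \<in> invlim H h" using f x by blast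
  have "i k < i n" using i \<open>k < n\<close> by (rule strict_monoD)
  then have "g k (p (i n) (i k) a) = g k (x (i k))"
    using invlim_proj[OF SP x, of "i k" "i n"] xa by simp
  also have "\<dots> = f x k" using g[OF x] by simp
  also have "\<dots> = h n k (f x n)" using invlim_proj[OF SH fx \<open>k < n\<close>] by simp
  also have "\<dots> = h n k (g n a)" using g[OF x] xa by simp
  finally show ?thesis .
qed

theorem mainTheorem7:
  fixes P :: "nat \<Rightarrow> 'a set" and leP :: "nat \<Rightarrow> 'a \<Rightarrow> 'a \<Rightarrow> bool" and p :: "nat \<Rightarrow> nat \<Rightarrow> 'a \<Rightarrow> 'a"
    and H :: "nat \<Rightarrow> 'b set" and leH :: "nat \<Rightarrow> 'b \<Rightarrow> 'b \<Rightarrow> bool" and h :: "nat \<Rightarrow> nat \<Rightarrow> 'b \<Rightarrow> 'b"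
    and f :: "(nat \<Rightarrow> 'a) \<Rightarrow> (nat \<Rightarrow> 'b)"
  assumes "profinite_system P leP p"
    and "profinite_system H leH h"
    and "quotient_map_poset (invlim P p) (invlim_le leP) (invlim H h) (invlim_le leH) f"
    and "continuous_map (invlim_top P p) (invlim_top H h) f"
  shows "\<exists>i :: nat \<Rightarrow> nat. \<exists>g :: nat \<Rightarrow> 'a \<Rightarrow> 'b.
           strict_mono i \<and>
           (\<forall>j. quotient_map_poset (P (i j)) (leP (i j)) (H j) (leH j) (g j)) \<and>
           (\<forall>x\<in>invlim P p. f x = (\<lambda>j. g j (x (i j)))) \<and>
           (\<forall>k n. k < n \<longrightarrow> (\<forall>x\<in>P (i n). g k (p (i n) (i k) x) = h n k (g n x)))"
proof -
  obtain i g where i: "strict_mono i" and g: "\<And>x j. x \<in> invlim P p \<Longrightarrow> f x j = g j (x (i j))"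
    using continuous_map_invlim_factors_levelwise[OF assms(1,4)] by blast
  have "quotient_map_poset (P (i j)) (leP (i j)) (H j) (leH j) (g j)" for j
    by (rule quotient_map_poset_level_factor[OF assms(1-3) g])
  moreover have "\<forall>x\<in>invlim P p. f x = (\<lambda>j. g j (x (i j)))" using g by blast
  moreover have "g k (p (i n) (i k) a) = h n k (g n a)" if "k < n" "a \<in> P (i n)" for k n a
  proof -
    have "f ` invlim P p \<subseteq> invlim H h" using quotient_map_poset_image[OF assms(3)] by simp
    then show ?thesis using level_factors_commute[OF assms(1,2), of f g i k n a] g i that by blast
  qed
  ultimately show ?thesis using i by blast
qed

end
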